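(* Let $U=\{(x_1,x_2,x_3,y_1,y_2,y_3)\in\mathbb{R}^6 : X\neq 0,\ Y\neq 0,\ Z\neq 0\}$. For every choice of polynomials $P_1,\dots,P_8\in\mathbb{Q}[x_1,x_2,x_3,y_1,y_2,y_3]$ and every variable $\xi\in\{x_1,x_2,x_3,y_1,y_2,y_3\}$ there exist polynomials $Q_1,\dots,Q_8\in\mathbb{Q}[x_1,x_2,x_3,y_1,y_2,y_3]$ with $Q_1=0$ such that $\frac{\partial}{\partial\xi}F_{Q_1,\dots,Q_8}=F_{P_1,\dots,P_8}$ on $U$. In particular, for any multi-indices $\lambda,\mu\in\mathbb{N}_0^3$, a six-fold antiderivative of $\frac{x_1^{\lambda_1}x_2^{\lambda_2}x_3^{\lambda_3}y_1^{\mu_1}y_2^{\mu_2}y_3^{\mu_3}}{R}$ with respect to $y_1,y_2,y_3,x_1,x_2,x_3$ can be chosen of the form $F_{Q_1,\dots,Q_8}$ with rational polynomials $Q_i$ (no stand-alone polynomial term is needed).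
   Context: For $(x_1,x_2,x_3,y_1,y_2,y_3)\in\mathbb{R}^6$ set $X=x_1-y_1$, $Y=x_2-y_2$, $Z=x_3-y_3$, $R=\sqrt{X^2+Y^2+Z^2}$. For polynomials $P_1,\dots,P_8$ define on $U$ $$F_{P_1,\dots,P_8}=P_1\frac1R+P_2R+P_3\operatorname{atanh}\!\Big(\frac XR\Big)+P_4\operatorname{atanh}\!\Big(\frac YR\Big)+P_5\operatorname{atanh}\!\Big(\frac ZR\Big)+P_6\arctan\!\Big(\frac XR\frac YZ\Big)+P_7\arctan\!\Big(\frac XR\frac ZY\Big)+P_8\arctan\!\Big(\frac YR\frac ZX\Big).$$ *)

theory Defs
  imports "HOL-Analysis.Analysis"
begin

text \<open>Points of R^6 are vectors p :: real^6 with p$1,p$2,p$3 = x1,x2,x3 and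
  p$4,p$5,p$6 = y1,y2,y3.\<close>

inductive_set qpoly :: "(real^6 \<Rightarrow> real) set" where
  qpoly_const: "(\<lambda>_. of_rat c) \<in> qpoly"
| qpoly_var: "(\<lambda>p. p $ i) \<in> qpoly"
| qpoly_add: "f \<in> qpoly \<Longrightarrow> g \<in> qpoly \<Longrightarrow> (\<lambda>p. f p + g p) \<in> qpoly"
| qpoly_mult: "f \<in> qpoly \<Longrightarrow> g \<in> qpoly \<Longrightarrow> (\<lambda>p. f p * g p) \<in> qpoly"

definition Xc :: "real^6 \<Rightarrow> real" where "Xc p = p$1 - p$4"
definition Yc :: "real^6 \<Rightarrow> real" where "Yc p = p$2 - p$5"
definition Zc :: "real^6 \<Rightarrow> real" where "Zc p = p$3 - p$6"
definition Rc :: "real^6 \<Rightarrow> real" where "Rc p = sqrt (Xc p ^ 2 + Yc p ^ 2 + Zc p ^ 2)"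

definition U6 :: "(real^6) set" where
  "U6 = {p. Xc p \<noteq> 0 \<and> Yc p \<noteq> 0 \<and> Zc p \<noteq> 0}"

definition FF :: "(real^6 \<Rightarrow> real) \<Rightarrow> (real^6 \<Rightarrow> real) \<Rightarrow> (real^6 \<Rightarrow> real) \<Rightarrow> (real^6 \<Rightarrow> real)
   \<Rightarrow> (real^6 \<Rightarrow> real) \<Rightarrow> (real^6 \<Rightarrow> real) \<Rightarrow> (real^6 \<Rightarrow> real) \<Rightarrow> (real^6 \<Rightarrow> real)
   \<Rightarrow> real^6 \<Rightarrow> real" where
  "FF P1 P2 P3 P4 P5 P6 P7 P8 p =
     P1 p * (1 / Rc p) + P2 p * Rc p
   + P3 p * artanh (Xc p / Rc p) + P4 p * artanh (Yc p / Rc p) + P5 p * artanh (Zc p / Rc p)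
   + P6 p * arctan (Xc p / Rc p * (Yc p / Zc p))
   + P7 p * arctan (Xc p / Rc p * (Zc p / Yc p))
   + P8 p * arctan (Yc p / Rc p * (Zc p / Xc p))"

definition upd :: "real^6 \<Rightarrow> 6 \<Rightarrow> real \<Rightarrow> real^6" where
  "upd p i t = (\<chi> j. if j = i then t else p $ j)"

definition has_partial :: "(real^6 \<Rightarrow> real) \<Rightarrow> 6 \<Rightarrow> (real^6 \<Rightarrow> real) \<Rightarrow> (real^6) set \<Rightarrow> bool" where
  "has_partial F i G S \<longleftrightarrow>
     (\<forall>p\<in>S. ((\<lambda>t. F (upd p i t)) has_real_derivative G p) (at (p $ i)))"

end

theory Submission
  imports Defs
begin

(* Write b_1, ..., b_8 for the eight functions 1/R, R, artanh (X/R), ..., arctan (Y Z / (R X)) multiplied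
   by P_1, ..., P_8 in F.  Differentiating in one of the six coordinates moves only one of X, Y, Z;
   after relabelling X, Y, Z (which permutes the b_k) it becomes d/dx of a function of (x, y, z).  The
   x-derivatives of the sums q_2 b_2 + ... + q_8 b_8 with rational polynomial coefficients form a module
   over the rational polynomials in y and z, so it suffices that they contain x^n b_k for all n and k.
   Integration by parts, (x^(n+1) b_k)' = x^(n+1) b_k' + (n+1) x^n b_k, reduces this to x^(n+1) b_k',
   and the derivatives b_k' are rational functions of x, y, z and R for which R^2 = x^2 + y^2 + z^2
   gives two-step recursions in n. *)

section \<open>The distance R and its derivatives in the first variable\<close>

definition rad :: "real \<Rightarrow> real \<Rightarrow> real \<Rightarrow> real" where
  "rad x y z = sqrt (x\<^sup>2 + y\<^sup>2 + z\<^sup>2)"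

lemma rad_pos: "y \<noteq> 0 \<Longrightarrow> 0 < rad x y z"
  unfolding rad_def by (simp add: add_nonneg_pos add_pos_nonneg)

lemma rad_squared: "(rad x y z)\<^sup>2 = x\<^sup>2 + y\<^sup>2 + z\<^sup>2"
  unfolding rad_def by simp

lemma rad_commute: "rad x z y = rad x y z" "rad y x z = rad x y z" "rad z y x = rad x y z"
  unfolding rad_def by (simp_all add: ac_simps)

lemma Rc_eq_rad: "Rc p = rad (Xc p) (Yc p) (Zc p)"
  unfolding Rc_def rad_def ..

lemma DERIV_rad:
  assumes "y \<noteq> 0" shows "((\<lambda>t. rad t y z) has_real_derivative x / rad x y z) (at x)"
proof -
  have "0 < x\<^sup>2 + y\<^sup>2 + z\<^sup>2" using assms by (simp add: add_nonneg_pos add_pos_nonneg)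
  have "((\<lambda>t. t\<^sup>2 + y\<^sup>2 + z\<^sup>2) has_real_derivative 2 * x) (at x)"
    by (auto intro!: derivative_eq_intros)
  from DERIV_chain2[OF DERIV_real_sqrt[OF \<open>0 < x\<^sup>2 + y\<^sup>2 + z\<^sup>2\<close>] this]
  show ?thesis unfolding rad_def by (rule DERIV_cong) (simp add: field_simps)
qed

lemma DERIV_const_div_rad:
  assumes "y \<noteq> 0" shows "((\<lambda>t. c / rad t y z) has_real_derivative - c * x / rad x y z ^ 3) (at x)"
proof -
  have r: "0 < rad x y z" using rad_pos[OF assms] .
  have "((\<lambda>t. c / rad t y z) has_real_derivative
      (0 * rad x y z - c * (x / rad x y z)) / (rad x y z * rad x y z)) (at x)"
    by (rule DERIV_divide[OF DERIV_const DERIV_rad[OF assms]]) (use r in simp)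
  then show ?thesis by (rule DERIV_cong) (use r in \<open>simp add: field_simps power3_eq_cube\<close>)
qed

lemma DERIV_div_rad:
  assumes "y \<noteq> 0" shows "((\<lambda>t. t / rad t y z) has_real_derivative (y\<^sup>2 + z\<^sup>2) / rad x y z ^ 3) (at x)"
proof -
  have r: "0 < rad x y z" "(rad x y z)\<^sup>2 = x\<^sup>2 + y\<^sup>2 + z\<^sup>2" using rad_pos[OF assms] rad_squared by auto
  have "((\<lambda>t. t / rad t y z) has_real_derivative
      (1 * rad x y z - x * (x / rad x y z)) / (rad x y z * rad x y z)) (at x)"
    by (rule DERIV_divide[OF DERIV_ident DERIV_rad[OF assms]]) (use r in simp)
  then show ?thesis
    by (rule DERIV_cong) (use r in \<open>simp add: field_simps power3_eq_cube power2_eq_square\<close>)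
qed

lemma abs_div_rad_less_1:
  assumes "0 < x\<^sup>2 + z\<^sup>2" shows "\<bar>y / rad x y z\<bar> < 1"
proof -
  have "sqrt (y\<^sup>2) < sqrt (x\<^sup>2 + y\<^sup>2 + z\<^sup>2)"
    by (rule real_sqrt_less_mono) (use assms in simp)
  then have "\<bar>y\<bar> < rad x y z" by (simp add: rad_def)
  then show ?thesis by (simp add: abs_div)
qed

lemma one_minus_square_div: "R \<noteq> 0 \<Longrightarrow> 1 - (a / R)\<^sup>2 = (R\<^sup>2 - a\<^sup>2) / R\<^sup>2" for R a :: real
  by (simp add: field_simps)

lemma one_plus_square_div:
  "R \<noteq> 0 \<Longrightarrow> c \<noteq> 0 \<Longrightarrow> 1 + (a / R * (b / c))\<^sup>2 = (R\<^sup>2 * c\<^sup>2 + a\<^sup>2 * b\<^sup>2) / (R\<^sup>2 * c\<^sup>2)" for R a b c :: real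
  by (simp add: field_simps)

lemma DERIV_artanh_x_div_rad:
  assumes "y \<noteq> 0" shows "((\<lambda>t. artanh (t / rad t y z)) has_real_derivative 1 / rad x y z) (at x)"
proof -
  have r: "0 < rad x y z" using rad_pos[OF assms] .
  have yz: "0 < y\<^sup>2 + z\<^sup>2" using assms by (simp add: add_pos_nonneg)
  have e: "1 - (x / rad x y z)\<^sup>2 = (y\<^sup>2 + z\<^sup>2) / (rad x y z)\<^sup>2"
    using r by (simp add: one_minus_square_div rad_squared)
  have "1 / (Q / R\<^sup>2) * (Q / R ^ 3) = 1 / R" if "0 < R" "0 < Q" for R Q :: real
    using that by (simp add: field_simps power2_eq_square power3_eq_cube)
  note alg = this[OF r yz]
  have "\<bar>x / rad x y z\<bar> < 1"
    using abs_div_rad_less_1[OF yz, of x] by (simp add: rad_commute)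
  from DERIV_chain2[OF artanh_real_has_field_derivative[OF this] DERIV_div_rad[OF assms]]
  show ?thesis by (rule DERIV_cong) (unfold e, rule alg)
qed

lemma DERIV_artanh_y_div_rad:
  assumes "y \<noteq> 0" "z \<noteq> 0"
  shows "((\<lambda>t. artanh (y / rad t y z)) has_real_derivative - (x * y / (rad x y z * (x\<^sup>2 + z\<^sup>2)))) (at x)"
proof -
  have r: "0 < rad x y z" using rad_pos[OF assms(1)] .
  have xz: "0 < x\<^sup>2 + z\<^sup>2" using assms by (simp add: add_nonneg_pos)
  have e: "1 - (y / rad x y z)\<^sup>2 = (x\<^sup>2 + z\<^sup>2) / (rad x y z)\<^sup>2"
    using r by (simp add: one_minus_square_div rad_squared)
  have "1 / (P / R\<^sup>2) * (- y * x / R ^ 3) = - (x * y / (R * P))" if "0 < R" "0 < P" for R P :: real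
    using that by (simp add: field_simps power2_eq_square power3_eq_cube)
  note alg = this[OF r xz]
  from DERIV_chain2[OF artanh_real_has_field_derivative[OF abs_div_rad_less_1[OF xz]]
      DERIV_const_div_rad[OF assms(1)]]
  show ?thesis by (rule DERIV_cong) (unfold e, rule alg)
qed

lemma DERIV_arctan_xy_div_rz:
  assumes "y \<noteq> 0" "z \<noteq> 0"
  shows "((\<lambda>t. arctan (t / rad t y z * (y / z))) has_real_derivative
      y * z / (rad x y z * (x\<^sup>2 + z\<^sup>2))) (at x)"
proof -
  have r: "0 < rad x y z" using rad_pos[OF assms(1)] .
  have pos: "0 < x\<^sup>2 + z\<^sup>2" "0 < y\<^sup>2 + z\<^sup>2" using assms by (simp_all add: add_nonneg_pos)
  have "(rad x y z)\<^sup>2 * z\<^sup>2 + x\<^sup>2 * y\<^sup>2 = (x\<^sup>2 + z\<^sup>2) * (y\<^sup>2 + z\<^sup>2)"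
    by (simp add: rad_squared algebra_simps)
  then have e: "1 + (x / rad x y z * (y / z))\<^sup>2 = (x\<^sup>2 + z\<^sup>2) * (y\<^sup>2 + z\<^sup>2) / ((rad x y z)\<^sup>2 * z\<^sup>2)"
    by (subst one_plus_square_div) (use r assms in auto)
  have "inverse (P * Q / (R\<^sup>2 * z\<^sup>2)) * (Q / R ^ 3 * (y / z)) = y * z / (R * P)"
    if "0 < R" "0 < P" "0 < Q" for R P Q :: real
    using that assms by (simp add: field_simps power2_eq_square power3_eq_cube)
  note alg = this[OF r pos]
  have "((\<lambda>t. t / rad t y z * (y / z)) has_real_derivative (y\<^sup>2 + z\<^sup>2) / rad x y z ^ 3 * (y / z)) (at x)"
    by (intro DERIV_cmult_right DERIV_div_rad assms)
  from DERIV_chain2[OF DERIV_arctan this]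
  show ?thesis by (rule DERIV_cong) (unfold e, rule alg)
qed

lemma DERIV_arctan_yz_div_rx:
  assumes "x \<noteq> 0" "y \<noteq> 0" "z \<noteq> 0"
  shows "((\<lambda>t. arctan (y / rad t y z * (z / t))) has_real_derivative
      - (y * z / (rad x y z * (x\<^sup>2 + z\<^sup>2))) - y * z / (rad x y z * (x\<^sup>2 + y\<^sup>2))) (at x)"
proof -
  have r: "0 < rad x y z" using rad_pos[OF assms(2)] .
  have pos: "0 < x\<^sup>2 + y\<^sup>2" "0 < x\<^sup>2 + z\<^sup>2" using assms by (simp_all add: add_nonneg_pos)
  have "(rad x y z)\<^sup>2 * x\<^sup>2 + y\<^sup>2 * z\<^sup>2 = (x\<^sup>2 + y\<^sup>2) * (x\<^sup>2 + z\<^sup>2)"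
    by (simp add: rad_squared algebra_simps)
  then have e: "1 + (y / rad x y z * (z / x))\<^sup>2 = (x\<^sup>2 + y\<^sup>2) * (x\<^sup>2 + z\<^sup>2) / ((rad x y z)\<^sup>2 * x\<^sup>2)"
    by (subst one_plus_square_div) (use r assms in auto)
  have alg: "inverse (P * Q / (R\<^sup>2 * x\<^sup>2)) * (y / R * ((0 * x - z * 1) / (x * x)) + (- y * x / R ^ 3) * (z / x))
      = - (y * z / (R * Q)) - y * z / (R * P)"
    if "0 < R" "x \<noteq> 0" "0 < P" "0 < Q" "R\<^sup>2 + x\<^sup>2 = P + Q" for R P Q :: real
    using that(1-4) apply (simp add: field_simps) using that(5) by algebra
  have "(rad x y z)\<^sup>2 + x\<^sup>2 = (x\<^sup>2 + y\<^sup>2) + (x\<^sup>2 + z\<^sup>2)"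
    by (simp add: rad_squared)
  note alg = alg[OF r assms(1) pos this]
  have "((\<lambda>t. z / t) has_real_derivative (0 * x - z * 1) / (x * x)) (at x)"
    by (rule DERIV_divide[OF DERIV_const DERIV_ident]) (use assms in simp)
  from DERIV_mult'[OF DERIV_const_div_rad[OF assms(2)] this]
  have "((\<lambda>t. y / rad t y z * (z / t)) has_real_derivative
      y / rad x y z * ((0 * x - z * 1) / (x * x)) + (- y * x / rad x y z ^ 3) * (z / x)) (at x)" .
  from DERIV_chain2[OF DERIV_arctan this]
  show ?thesis by (rule DERIV_cong) (unfold e, rule alg)
qed

section \<open>The eight transcendental functions\<close>

text \<open>\<open>basis k\<close> is the function multiplied by \<open>P\<^sub>k\<^sub>+\<^sub>1\<close> in \<open>FF\<close>, in the variables
  \<open>x = X\<close>, \<open>y = Y\<close>, \<open>z = Z\<close>.\<close>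
definition basis :: "nat \<Rightarrow> real \<Rightarrow> real \<Rightarrow> real \<Rightarrow> real" where
  "basis k x y z = [1 / rad x y z, rad x y z,
     artanh (x / rad x y z), artanh (y / rad x y z), artanh (z / rad x y z),
     arctan (x / rad x y z * (y / z)), arctan (x / rad x y z * (z / y)), arctan (y / rad x y z * (z / x))] ! k"

definition swap_yz_index :: "nat \<Rightarrow> nat" where
  "swap_yz_index k = [0, 1, 2, 4, 3, 6, 5, 7] ! k"

definition swap_xy_index :: "nat \<Rightarrow> nat" where
  "swap_xy_index k = [0, 1, 3, 2, 4, 5, 7, 6] ! k"

definition swap_xz_index :: "nat \<Rightarrow> nat" where
  "swap_xz_index k = [0, 1, 4, 3, 2, 7, 6, 5] ! k"

definition index_involution :: "(nat \<Rightarrow> nat) \<Rightarrow> bool" where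
  "index_involution \<sigma> \<longleftrightarrow> \<sigma> 0 = 0 \<and> (\<forall>k<8. \<sigma> k < 8 \<and> \<sigma> (\<sigma> k) = k)"

lemma less_8_cases: "(k::nat) < 8 \<Longrightarrow> k = 0 \<or> k = 1 \<or> k = 2 \<or> k = 3 \<or> k = 4 \<or> k = 5 \<or> k = 6 \<or> k = 7"
  by auto

lemma index_involutions:
  "index_involution id" "index_involution swap_yz_index"
  "index_involution swap_xy_index" "index_involution swap_xz_index"
  unfolding index_involution_def swap_yz_index_def swap_xy_index_def swap_xz_index_def
  by (auto dest!: less_8_cases)

lemma basis_swaps:
  assumes "k < 8"
  shows "basis k x z y = basis (swap_yz_index k) x y z"
    and "basis k y x z = basis (swap_xy_index k) x y z"
    and "basis k z y x = basis (swap_xz_index k) x y z"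
  using less_8_cases[OF assms]
  by (auto simp: basis_def swap_yz_index_def swap_xy_index_def swap_xz_index_def rad_commute mult_ac)

lemma sum_basis_change:
  assumes \<sigma>: "index_involution \<sigma>" and frame: "\<And>k. k < 8 \<Longrightarrow> basis k a b c = basis (\<sigma> k) x y z"
  shows "(\<Sum>k\<in>{1..<8}. f k * basis k a b c) = (\<Sum>k\<in>{1..<8}. f (\<sigma> k) * basis k x y z)"
proof -
  have \<sigma>1: "\<sigma> k \<in> {1..<8}" "\<sigma> (\<sigma> k) = k" if "k \<in> {1..<8}" for k
    using \<sigma> that unfolding index_involution_def by (metis atLeastLessThan_iff less_one linorder_not_le)+
  have "(\<Sum>k\<in>{1..<8}. f k * basis k a b c) = (\<Sum>k\<in>{1..<8}. f (\<sigma> (\<sigma> k)) * basis (\<sigma> k) x y z)"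
    using \<sigma>1 frame by (intro sum.cong) auto
  also have "\<dots> = (\<Sum>k\<in>{1..<8}. f (\<sigma> k) * basis k x y z)"
    by (rule sum.reindex_bij_witness[of _ \<sigma> \<sigma>]) (use \<sigma>1 in auto)
  finally show ?thesis .
qed

text \<open>\<open>basis 0\<close> never occurs in an antiderivative, and \<open>basis 4\<close>, \<open>basis 6\<close> are handled through
  the exchange of \<open>y\<close> and \<open>z\<close>, so only these derivatives are needed.\<close>
lemma DERIV_basis:
  assumes "x \<noteq> 0" "y \<noteq> 0" "z \<noteq> 0"
  shows "((\<lambda>t. basis 1 t y z) has_real_derivative x / rad x y z) (at x)"
    and "((\<lambda>t. basis 2 t y z) has_real_derivative 1 / rad x y z) (at x)"
    and "((\<lambda>t. basis 3 t y z) has_real_derivative - (x * y / (rad x y z * (x\<^sup>2 + z\<^sup>2)))) (at x)"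
    and "((\<lambda>t. basis 5 t y z) has_real_derivative y * z / (rad x y z * (x\<^sup>2 + z\<^sup>2))) (at x)"
    and "((\<lambda>t. basis 7 t y z) has_real_derivative
      - (y * z / (rad x y z * (x\<^sup>2 + z\<^sup>2))) - y * z / (rad x y z * (x\<^sup>2 + y\<^sup>2))) (at x)"
  using DERIV_rad[OF assms(2)] DERIV_artanh_x_div_rad[OF assms(2)] DERIV_artanh_y_div_rad[OF assms(2,3)]
    DERIV_arctan_xy_div_rz[OF assms(2,3)] DERIV_arctan_yz_div_rx[OF assms]
  by (simp_all add: basis_def)

section \<open>Antiderivatives in the first variable\<close>

inductive_set qpoly3 :: "(real \<Rightarrow> real \<Rightarrow> real \<Rightarrow> real) set" where
  qpoly3_const: "(\<lambda>_ _ _. of_rat c) \<in> qpoly3"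
| qpoly3_x: "(\<lambda>x y z. x) \<in> qpoly3"
| qpoly3_y: "(\<lambda>x y z. y) \<in> qpoly3"
| qpoly3_z: "(\<lambda>x y z. z) \<in> qpoly3"
| qpoly3_add: "f \<in> qpoly3 \<Longrightarrow> g \<in> qpoly3 \<Longrightarrow> (\<lambda>x y z. f x y z + g x y z) \<in> qpoly3"
| qpoly3_mult: "f \<in> qpoly3 \<Longrightarrow> g \<in> qpoly3 \<Longrightarrow> (\<lambda>x y z. f x y z * g x y z) \<in> qpoly3"

lemma qpoly3_Rats: "a \<in> \<rat> \<Longrightarrow> (\<lambda>_ _ _. a) \<in> qpoly3"
  by (auto elim!: Rats_cases intro: qpoly3_const)

lemma qpoly3_x_power: "(\<lambda>x y z. x ^ m) \<in> qpoly3"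
  by (induction m) (use qpoly3_Rats[of 1] in \<open>auto intro: qpoly3_mult qpoly3_x\<close>)

lemma qpoly3_swap_yz: "q \<in> qpoly3 \<Longrightarrow> (\<lambda>x y z. q x z y) \<in> qpoly3"
  by (induction q rule: qpoly3.induct) (auto intro: qpoly3.intros)

definition comb3 :: "(nat \<Rightarrow> real \<Rightarrow> real \<Rightarrow> real \<Rightarrow> real) \<Rightarrow> real \<Rightarrow> real \<Rightarrow> real \<Rightarrow> real" where
  "comb3 q x y z = (\<Sum>k\<in>{1..<8}. q k x y z * basis k x y z)"

definition x_antiderivable :: "(real \<Rightarrow> real \<Rightarrow> real \<Rightarrow> real) set" where
  "x_antiderivable = {g. \<exists>q. (\<forall>k. q k \<in> qpoly3) \<and>
     (\<forall>x y z. x \<noteq> 0 \<longrightarrow> y \<noteq> 0 \<longrightarrow> z \<noteq> 0 \<longrightarrow>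
        ((\<lambda>t. comb3 q t y z) has_real_derivative g x y z) (at x))}"

lemma x_antiderivableI:
  assumes "\<And>k. q k \<in> qpoly3"
    and "\<And>x y z. x \<noteq> 0 \<Longrightarrow> y \<noteq> 0 \<Longrightarrow> z \<noteq> 0 \<Longrightarrow>
      ((\<lambda>t. comb3 q t y z) has_real_derivative g x y z) (at x)"
  shows "g \<in> x_antiderivable"
  using assms unfolding x_antiderivable_def by blast

lemma x_antiderivableE:
  assumes "g \<in> x_antiderivable"
  obtains q where "\<And>k. q k \<in> qpoly3"
    and "\<And>x y z. x \<noteq> 0 \<Longrightarrow> y \<noteq> 0 \<Longrightarrow> z \<noteq> 0 \<Longrightarrow>
      ((\<lambda>t. comb3 q t y z) has_real_derivative g x y z) (at x)"
  using assms unfolding x_antiderivable_def by blast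

lemma x_antiderivable_cong:
  assumes "g \<in> x_antiderivable" and "\<And>x y z. x \<noteq> 0 \<Longrightarrow> y \<noteq> 0 \<Longrightarrow> z \<noteq> 0 \<Longrightarrow> g' x y z = g x y z"
  shows "g' \<in> x_antiderivable"
  using assms(1) by (rule x_antiderivableE) (rule x_antiderivableI, auto simp: assms(2))

lemma x_antiderivable_add:
  assumes "f \<in> x_antiderivable" "g \<in> x_antiderivable"
  shows "(\<lambda>x y z. f x y z + g x y z) \<in> x_antiderivable"
proof -
  obtain p where p: "\<And>k. p k \<in> qpoly3"
    "\<And>x y z. x \<noteq> 0 \<Longrightarrow> y \<noteq> 0 \<Longrightarrow> z \<noteq> 0 \<Longrightarrow> ((\<lambda>t. comb3 p t y z) has_real_derivative f x y z) (at x)"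
    using assms(1) by (rule x_antiderivableE) blast
  obtain q where q: "\<And>k. q k \<in> qpoly3"
    "\<And>x y z. x \<noteq> 0 \<Longrightarrow> y \<noteq> 0 \<Longrightarrow> z \<noteq> 0 \<Longrightarrow> ((\<lambda>t. comb3 q t y z) has_real_derivative g x y z) (at x)"
    using assms(2) by (rule x_antiderivableE) blast
  have "comb3 (\<lambda>k x y z. p k x y z + q k x y z) t y z = comb3 p t y z + comb3 q t y z" for t y z
    by (simp add: comb3_def distrib_right sum.distrib)
  then show ?thesis
    by (intro x_antiderivableI[where q = "\<lambda>k x y z. p k x y z + q k x y z"])
       (auto intro: qpoly3_add p q DERIV_add)
qed

lemma x_antiderivable_mult:
  assumes "g \<in> x_antiderivable" "h \<in> qpoly3" and indep: "\<And>x x' y z. h x y z = h x' y z"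
  shows "(\<lambda>x y z. h x y z * g x y z) \<in> x_antiderivable"
proof -
  obtain q where q: "\<And>k. q k \<in> qpoly3"
    "\<And>x y z. x \<noteq> 0 \<Longrightarrow> y \<noteq> 0 \<Longrightarrow> z \<noteq> 0 \<Longrightarrow> ((\<lambda>t. comb3 q t y z) has_real_derivative g x y z) (at x)"
    using assms(1) by (rule x_antiderivableE) blast
  show ?thesis
  proof (rule x_antiderivableI[where q = "\<lambda>k x y z. h x y z * q k x y z"])
    show "(\<lambda>x y z. h x y z * q k x y z) \<in> qpoly3" for k by (intro qpoly3_mult assms(2) q)
    fix x y z :: real assume "x \<noteq> 0" "y \<noteq> 0" "z \<noteq> 0"
    have "comb3 (\<lambda>k x y z. h x y z * q k x y z) t y z = h x y z * comb3 q t y z" for t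
      using indep[of t y z x] by (simp add: comb3_def sum_distrib_left mult.assoc)
    then show "((\<lambda>t. comb3 (\<lambda>k x y z. h x y z * q k x y z) t y z) has_real_derivative h x y z * g x y z) (at x)"
      using q(2) \<open>x \<noteq> 0\<close> \<open>y \<noteq> 0\<close> \<open>z \<noteq> 0\<close> by (simp add: DERIV_cmult)
  qed
qed

lemma x_antiderivable_scale:
  "g \<in> x_antiderivable \<Longrightarrow> a \<in> \<rat> \<Longrightarrow> (\<lambda>x y z. a * g x y z) \<in> x_antiderivable"
  using x_antiderivable_mult[of g "\<lambda>_ _ _. a"] qpoly3_Rats by blast

lemma x_antiderivable_mult_y: "g \<in> x_antiderivable \<Longrightarrow> (\<lambda>x y z. y * g x y z) \<in> x_antiderivable"
  using x_antiderivable_mult[of g "\<lambda>_ y _. y"] qpoly3_y by blast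

lemma x_antiderivable_mult_z: "g \<in> x_antiderivable \<Longrightarrow> (\<lambda>x y z. z * g x y z) \<in> x_antiderivable"
  using x_antiderivable_mult[of g "\<lambda>_ _ z. z"] qpoly3_z by blast

lemma x_antiderivable_lincomb:
  "f \<in> x_antiderivable \<Longrightarrow> g \<in> x_antiderivable \<Longrightarrow> a \<in> \<rat> \<Longrightarrow> b \<in> \<rat> \<Longrightarrow>
    (\<lambda>x y z. a * f x y z + b * g x y z) \<in> x_antiderivable"
  by (intro x_antiderivable_add x_antiderivable_scale)

lemma x_antiderivable_swap_yz:
  assumes "g \<in> x_antiderivable" shows "(\<lambda>x y z. g x z y) \<in> x_antiderivable"
proof -
  obtain q where q: "\<And>k. q k \<in> qpoly3"
    "\<And>x y z. x \<noteq> 0 \<Longrightarrow> y \<noteq> 0 \<Longrightarrow> z \<noteq> 0 \<Longrightarrow> ((\<lambda>t. comb3 q t y z) has_real_derivative g x y z) (at x)"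
    using assms by (rule x_antiderivableE) blast
  have "comb3 (\<lambda>k x y z. q (swap_yz_index k) x z y) t y z = comb3 q t z y" for t y z
    unfolding comb3_def
    by (rule sum_basis_change[OF index_involutions(2), symmetric]) (simp add: basis_swaps(1))
  then show ?thesis
    by (intro x_antiderivableI[where q = "\<lambda>k x y z. q (swap_yz_index k) x z y"])
       (auto intro: qpoly3_swap_yz q)
qed

lemma x_antiderivable_deriv_pow_mul_basis:
  assumes j: "j \<in> {1..<8}"
    and deriv: "\<And>x y z. x \<noteq> 0 \<Longrightarrow> y \<noteq> 0 \<Longrightarrow> z \<noteq> 0 \<Longrightarrow>
      ((\<lambda>t. basis j t y z) has_real_derivative b' x y z) (at x)"
  shows "(\<lambda>x y z. x ^ m * b' x y z + real m * x ^ (m - 1) * basis j x y z) \<in> x_antiderivable"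
proof (rule x_antiderivableI[where q = "\<lambda>k x y z. if k = j then x ^ m else 0"])
  show "(\<lambda>x y z. if k = j then x ^ m else 0) \<in> qpoly3" for k
    by (cases "k = j") (simp_all add: qpoly3_x_power qpoly3_Rats)
  fix x y z :: real assume "x \<noteq> 0" "y \<noteq> 0" "z \<noteq> 0"
  have "comb3 (\<lambda>k x y z. if k = j then x ^ m else 0) t y z = t ^ m * basis j t y z" for t
  proof -
    have "comb3 (\<lambda>k x y z. if k = j then x ^ m else 0) t y z
        = (\<Sum>k\<in>{1..<8}. if k = j then t ^ m * basis k t y z else 0)"
      unfolding comb3_def by (rule sum.cong) auto
    then show ?thesis using j by simp
  qed
  then show "((\<lambda>t. comb3 (\<lambda>k x y z. if k = j then x ^ m else 0) t y z) has_real_derivative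
      x ^ m * b' x y z + real m * x ^ (m - 1) * basis j x y z) (at x)"
    using DERIV_mult'[OF DERIV_pow deriv[OF \<open>x \<noteq> 0\<close> \<open>y \<noteq> 0\<close> \<open>z \<noteq> 0\<close>], of m] by simp
qed

lemma x_antiderivable_pow_mul_basis_by_parts:
  assumes j: "j \<in> {1..<8}"
    and deriv: "\<And>x y z. x \<noteq> 0 \<Longrightarrow> y \<noteq> 0 \<Longrightarrow> z \<noteq> 0 \<Longrightarrow>
      ((\<lambda>t. basis j t y z) has_real_derivative b' x y z) (at x)"
    and "(\<lambda>x y z. x ^ Suc k * b' x y z) \<in> x_antiderivable"
  shows "(\<lambda>x y z. x ^ k * basis j x y z) \<in> x_antiderivable"
proof -
  have "(\<lambda>x y z. 1 / real (Suc k) * (x ^ Suc k * b' x y z + real (Suc k) * x ^ (Suc k - 1) * basis j x y z)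
      + (- 1 / real (Suc k)) * (x ^ Suc k * b' x y z)) \<in> x_antiderivable"
    by (intro x_antiderivable_lincomb x_antiderivable_deriv_pow_mul_basis[OF j deriv] assms(3)) auto
  moreover have "1 / N * (a + N * c) + (- 1 / N) * a = c" if "N \<noteq> 0" for N a c :: real
    using that by (simp add: field_simps)
  ultimately show ?thesis
    by (elim x_antiderivable_cong) (simp add: mult.assoc)
qed

lemma x_antiderivable_pow_div_rad: "(\<lambda>x y z. x ^ m / rad x y z) \<in> x_antiderivable"
proof (induction m rule: nat_induct2)
  case 0
  show ?case
    using x_antiderivable_deriv_pow_mul_basis[OF _ DERIV_basis(2), of 0] by simp
next
  case 1
  show ?case
    using x_antiderivable_deriv_pow_mul_basis[OF _ DERIV_basis(1), of 0] by simp
next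
  case (step n)
  txt \<open>\<open>(x\<^sup>n\<^sup>+\<^sup>1 R)' = x\<^sup>n\<^sup>+\<^sup>2 / R + (n + 1) x\<^sup>n R\<close> and \<open>x\<^sup>n R = (x\<^sup>n\<^sup>+\<^sup>2 + y\<^sup>2 x\<^sup>n + z\<^sup>2 x\<^sup>n) / R\<close>.\<close>
  have "(\<lambda>x y z. x ^ Suc n * (x / rad x y z) + real (Suc n) * x ^ (Suc n - 1) * basis 1 x y z)
      \<in> x_antiderivable"
    by (rule x_antiderivable_deriv_pow_mul_basis[OF _ DERIV_basis(1)]) auto
  moreover have "(\<lambda>x y z. y * (y * (x ^ n / rad x y z)) + z * (z * (x ^ n / rad x y z))) \<in> x_antiderivable"
    by (intro x_antiderivable_add x_antiderivable_mult_y x_antiderivable_mult_z step)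
  ultimately have "(\<lambda>x y z. 1 / real (n + 2) * (x ^ Suc n * (x / rad x y z) + real (Suc n) * x ^ (Suc n - 1) * basis 1 x y z)
      + (- real (Suc n) / real (n + 2)) * (y * (y * (x ^ n / rad x y z)) + z * (z * (x ^ n / rad x y z))))
      \<in> x_antiderivable"
    by (rule x_antiderivable_lincomb) auto
  then show ?case
  proof (rule x_antiderivable_cong)
    fix x y z :: real assume "y \<noteq> 0"
    have r: "0 < rad x y z" "(rad x y z)\<^sup>2 = x\<^sup>2 + y\<^sup>2 + z\<^sup>2" using rad_pos[OF \<open>y \<noteq> 0\<close>] rad_squared by auto
    have ident: "u / R = 1 / N * (v * (x / R) + M * w * R) + (- M / N) * (y * (y * (w / R)) + z * (z * (w / R)))"
      if "0 < R" "R\<^sup>2 = x\<^sup>2 + y\<^sup>2 + z\<^sup>2" "M = N - 1" "0 < N" "u = x\<^sup>2 * w" "v = x * w"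
      for R N M u v w :: real
      using that(1,4) unfolding that(3,5,6) apply (simp add: field_simps) using that(2) by algebra
    have simps: "basis 1 x y z = rad x y z" "Suc n - 1 = n" by (simp_all add: basis_def)
    show "x ^ (n + 2) / rad x y z = 1 / real (n + 2) * (x ^ Suc n * (x / rad x y z)
        + real (Suc n) * x ^ (Suc n - 1) * basis 1 x y z)
      + (- real (Suc n) / real (n + 2)) * (y * (y * (x ^ n / rad x y z)) + z * (z * (x ^ n / rad x y z)))"
      unfolding simps by (rule ident[OF r]) (simp_all add: power_add power2_eq_square mult.commute)
  qed
qed

lemma x_antiderivable_pow_mul_y_div:
  "(\<lambda>x y z. x ^ Suc m * y / (rad x y z * (x\<^sup>2 + z\<^sup>2))) \<in> x_antiderivable"
proof -
  have two_step: "(\<lambda>x y z. x ^ (n + 2) * y / (rad x y z * (x\<^sup>2 + z\<^sup>2))) \<in> x_antiderivable"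
    if "(\<lambda>x y z. z * (x ^ n * y / (rad x y z * (x\<^sup>2 + z\<^sup>2)))) \<in> x_antiderivable" for n
  proof -
    have "(\<lambda>x y z. 1 * (y * (x ^ n / rad x y z)) + (- 1) * (z * (z * (x ^ n * y / (rad x y z * (x\<^sup>2 + z\<^sup>2))))))
        \<in> x_antiderivable"
      by (intro x_antiderivable_lincomb x_antiderivable_mult_y x_antiderivable_mult_z
          x_antiderivable_pow_div_rad that) auto
    then show ?thesis
    proof (rule x_antiderivable_cong)
      fix x y z :: real assume "y \<noteq> 0" "z \<noteq> 0"
      have pos: "0 < rad x y z" "0 < x\<^sup>2 + z\<^sup>2" using rad_pos[OF \<open>y \<noteq> 0\<close>] \<open>z \<noteq> 0\<close> by (auto simp: add_nonneg_pos)
      have ident: "u * y / (R * P) = 1 * (y * (w / R)) + (- 1) * (z * (z * (w * y / (R * P))))"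
        if "0 < R" "0 < P" "P = x\<^sup>2 + z\<^sup>2" "u = x\<^sup>2 * w" for R P u w :: real
        using that(1,2) unfolding that(4) apply (simp add: field_simps) using that(3) by algebra
      show "x ^ (n + 2) * y / (rad x y z * (x\<^sup>2 + z\<^sup>2)) = 1 * (y * (x ^ n / rad x y z))
          + (- 1) * (z * (z * (x ^ n * y / (rad x y z * (x\<^sup>2 + z\<^sup>2)))))"
        by (rule ident[OF pos refl]) (simp add: power_add power2_eq_square mult.commute)
    qed
  qed
  show ?thesis
  proof (induction m rule: nat_induct2)
    case 0
    have "(\<lambda>x y z. - 1 * (x ^ 0 * (- (x * y / (rad x y z * (x\<^sup>2 + z\<^sup>2)))) + real 0 * x ^ (0 - 1) * basis 3 x y z))
        \<in> x_antiderivable"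
      by (intro x_antiderivable_scale x_antiderivable_deriv_pow_mul_basis[OF _ DERIV_basis(3)]) auto
    then show ?case by (rule x_antiderivable_cong) simp
  next
    case 1
    have "(\<lambda>x y z. x ^ 0 * (y * z / (rad x y z * (x\<^sup>2 + z\<^sup>2))) + real 0 * x ^ (0 - 1) * basis 5 x y z)
        \<in> x_antiderivable"
      by (rule x_antiderivable_deriv_pow_mul_basis[OF _ DERIV_basis(4)]) auto
    then have "(\<lambda>x y z. z * (x ^ 0 * y / (rad x y z * (x\<^sup>2 + z\<^sup>2)))) \<in> x_antiderivable"
      by (rule x_antiderivable_cong) simp
    from two_step[OF this] show ?case by (simp add: numeral_2_eq_2)
  next
    case (step n)
    from two_step[OF x_antiderivable_mult_z[OF step]] show ?case by (simp add: numeral_2_eq_2)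
  qed
qed

lemma x_antiderivable_pow_mul_basis_swap_yz:
  assumes "j < 8" "(\<lambda>x y z. x ^ k * basis j x y z) \<in> x_antiderivable"
  shows "(\<lambda>x y z. x ^ k * basis (swap_yz_index j) x y z) \<in> x_antiderivable"
  using x_antiderivable_swap_yz[OF assms(2)] by (simp add: basis_swaps(1)[OF assms(1)])

lemma x_antiderivable_pow_mul_basis:
  assumes "j < 8" shows "(\<lambda>x y z. x ^ k * basis j x y z) \<in> x_antiderivable"
proof -
  note y_term = x_antiderivable_pow_mul_y_div
  have z_term: "(\<lambda>x y z. x ^ Suc m * z / (rad x y z * (x\<^sup>2 + y\<^sup>2))) \<in> x_antiderivable" for m
    using x_antiderivable_swap_yz[OF y_term[of m]] by (simp add: rad_commute)
  have j0: "(\<lambda>x y z. x ^ k * basis 0 x y z) \<in> x_antiderivable"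
    using x_antiderivable_pow_div_rad[of k] by (rule x_antiderivable_cong) (simp add: basis_def)
  have j1: "(\<lambda>x y z. x ^ k * basis 1 x y z) \<in> x_antiderivable"
    by (rule x_antiderivable_pow_mul_basis_by_parts[OF _ DERIV_basis(1)])
       (auto simp: power2_eq_square
          intro: x_antiderivable_cong[OF x_antiderivable_pow_div_rad[of "Suc (Suc k)"]])
  have j2: "(\<lambda>x y z. x ^ k * basis 2 x y z) \<in> x_antiderivable"
    by (rule x_antiderivable_pow_mul_basis_by_parts[OF _ DERIV_basis(2)])
       (auto intro: x_antiderivable_cong[OF x_antiderivable_pow_div_rad[of "Suc k"]])
  have j3: "(\<lambda>x y z. x ^ k * basis 3 x y z) \<in> x_antiderivable"
    by (rule x_antiderivable_pow_mul_basis_by_parts[OF _ DERIV_basis(3)])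
       (auto intro: x_antiderivable_cong[OF x_antiderivable_scale[OF y_term[of "Suc k"], of "- 1"]])
  have j5: "(\<lambda>x y z. x ^ k * basis 5 x y z) \<in> x_antiderivable"
    by (rule x_antiderivable_pow_mul_basis_by_parts[OF _ DERIV_basis(4)])
       (auto intro: x_antiderivable_cong[OF x_antiderivable_mult_z[OF y_term[of k]]])
  have j7: "(\<lambda>x y z. x ^ k * basis 7 x y z) \<in> x_antiderivable"
  proof (rule x_antiderivable_pow_mul_basis_by_parts[OF _ DERIV_basis(5)])
    have "(\<lambda>x y z. (- 1) * (z * (x ^ Suc k * y / (rad x y z * (x\<^sup>2 + z\<^sup>2))))
        + (- 1) * (y * (x ^ Suc k * z / (rad x y z * (x\<^sup>2 + y\<^sup>2))))) \<in> x_antiderivable"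
      by (intro x_antiderivable_lincomb x_antiderivable_mult_y x_antiderivable_mult_z y_term z_term) auto
    then show "(\<lambda>x y z. x ^ Suc k * (- (y * z / (rad x y z * (x\<^sup>2 + z\<^sup>2))) - y * z / (rad x y z * (x\<^sup>2 + y\<^sup>2))))
        \<in> x_antiderivable"
      by (rule x_antiderivable_cong) (simp add: algebra_simps)
  qed auto
  have "swap_yz_index 3 = 4" "swap_yz_index 5 = 6" by (simp_all add: swap_yz_index_def)
  then have j46: "(\<lambda>x y z. x ^ k * basis 4 x y z) \<in> x_antiderivable" "(\<lambda>x y z. x ^ k * basis 6 x y z) \<in> x_antiderivable"
    using x_antiderivable_pow_mul_basis_swap_yz[OF _ j3] x_antiderivable_pow_mul_basis_swap_yz[OF _ j5] by auto
  show ?thesis using less_8_cases[OF assms] j0 j1 j2 j3 j46 j5 j7 by auto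
qed

section \<open>Partial antiderivatives in the six coordinates\<close>

lemma qpoly_Rats: "a \<in> \<rat> \<Longrightarrow> (\<lambda>_. a) \<in> qpoly"
  by (auto elim!: Rats_cases intro: qpoly_const)

lemma qpoly_diff: "f \<in> qpoly \<Longrightarrow> g \<in> qpoly \<Longrightarrow> (\<lambda>p. f p - g p) \<in> qpoly"
  using qpoly_add[OF _ qpoly_mult[OF qpoly_Rats[of "- 1"]], of f g] by simp

lemma qpoly_power: "f \<in> qpoly \<Longrightarrow> (\<lambda>p. f p ^ n) \<in> qpoly"
  by (induction n) (auto intro: qpoly_mult qpoly_Rats[of 1, simplified])

lemma qpoly_coordinate_differences: "Xc \<in> qpoly" "Yc \<in> qpoly" "Zc \<in> qpoly"
  unfolding Xc_def[abs_def] Yc_def[abs_def] Zc_def[abs_def] by (intro qpoly_diff qpoly_var)+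

lemma qpoly3_compose:
  "q \<in> qpoly3 \<Longrightarrow> A \<in> qpoly \<Longrightarrow> B \<in> qpoly \<Longrightarrow> C \<in> qpoly \<Longrightarrow> (\<lambda>p. q (A p) (B p) (C p)) \<in> qpoly"
  by (induction q rule: qpoly3.induct) (auto intro: qpoly.intros)

lemma upd_nth: "upd p i t $ j = (if j = i then t else p $ j)"
  unfolding upd_def by simp

lemma exhaust_6: "(i::6) = 1 \<or> i = 2 \<or> i = 3 \<or> i = 4 \<or> i = 5 \<or> i = 6"
proof (induct i)
  case (of_int z)
  then have "z = 0 \<or> z = 1 \<or> z = 2 \<or> z = 3 \<or> z = 4 \<or> z = 5" by fastforce
  then show ?case by auto
qed

definition comb6 :: "(nat \<Rightarrow> real^6 \<Rightarrow> real) \<Rightarrow> real^6 \<Rightarrow> real" where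
  "comb6 Q p = (\<Sum>k\<in>{1..<8}. Q k p * basis k (Xc p) (Yc p) (Zc p))"

lemma sum_1_to_7: "(\<Sum>k\<in>{1..<8}. f k) = f 1 + f 2 + f 3 + f 4 + f 5 + f 6 + (f 7 :: real)" for f :: "nat \<Rightarrow> real"
  by (simp add: numeral_eq_Suc atLeastLessThanSuc add_ac)

lemma FF_zero_eq_comb6: "FF (\<lambda>_. 0) (Q 1) (Q 2) (Q 3) (Q 4) (Q 5) (Q 6) (Q 7) = comb6 Q"
  unfolding comb6_def sum_1_to_7 by (simp add: fun_eq_iff FF_def basis_def Rc_eq_rad)

definition antiderivable :: "6 \<Rightarrow> (real^6 \<Rightarrow> real) set" where
  "antiderivable i = {G. \<exists>Q. (\<forall>k. Q k \<in> qpoly) \<and> has_partial (comb6 Q) i G U6}"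

lemma antiderivableI:
  "(\<And>k. Q k \<in> qpoly) \<Longrightarrow> has_partial (comb6 Q) i G U6 \<Longrightarrow> G \<in> antiderivable i"
  unfolding antiderivable_def by blast

lemma antiderivableE:
  assumes "G \<in> antiderivable i"
  obtains Q where "\<And>k. Q k \<in> qpoly" "has_partial (comb6 Q) i G U6"
  using assms unfolding antiderivable_def by blast

lemma antiderivable_add:
  assumes "F \<in> antiderivable i" "G \<in> antiderivable i"
  shows "(\<lambda>p. F p + G p) \<in> antiderivable i"
proof -
  obtain P where P: "\<And>k. P k \<in> qpoly" "has_partial (comb6 P) i F U6"
    using assms(1) by (rule antiderivableE) blast
  obtain Q where Q: "\<And>k. Q k \<in> qpoly" "has_partial (comb6 Q) i G U6"
    using assms(2) by (rule antiderivableE) blast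
  have "comb6 (\<lambda>k p. P k p + Q k p) p = comb6 P p + comb6 Q p" for p
    by (simp add: comb6_def distrib_right sum.distrib)
  with P(2) Q(2) have "has_partial (comb6 (\<lambda>k p. P k p + Q k p)) i (\<lambda>p. F p + G p) U6"
    unfolding has_partial_def by (simp add: DERIV_add)
  then show ?thesis by (rule antiderivableI[rotated]) (intro qpoly_add P Q)
qed

lemma antiderivable_mult:
  assumes "G \<in> antiderivable i" "c \<in> qpoly" and indep: "\<And>p t. c (upd p i t) = c p"
  shows "(\<lambda>p. c p * G p) \<in> antiderivable i"
proof -
  obtain Q where Q: "\<And>k. Q k \<in> qpoly" "has_partial (comb6 Q) i G U6"
    using assms(1) by (rule antiderivableE) blast
  have "comb6 (\<lambda>k p. c p * Q k p) (upd p i t) = c p * comb6 Q (upd p i t)" for p t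
    using indep[of p t] by (simp add: comb6_def sum_distrib_left mult.assoc)
  with Q(2) have "has_partial (comb6 (\<lambda>k p. c p * Q k p)) i (\<lambda>p. c p * G p) U6"
    unfolding has_partial_def by (simp add: DERIV_cmult)
  then show ?thesis by (rule antiderivableI[rotated]) (intro qpoly_mult assms(2) Q)
qed

text \<open>Differentiating in coordinate \<open>i\<close> moves only \<open>A = \<plusminus>(p\<^sub>i - p\<^sub>j)\<close>, one of \<open>X\<close>, \<open>Y\<close>, \<open>Z\<close>;
  \<open>(A, B, C)\<close> is the reordering of \<open>(X, Y, Z)\<close> that puts it first, and \<open>\<sigma>\<close> records how this
  permutes the functions \<open>basis k\<close>.\<close>
locale coordinate_frame =
  fixes i j :: 6 and s :: real and A B C :: "real^6 \<Rightarrow> real" and \<sigma> :: "nat \<Rightarrow> nat"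
  assumes j_neq_i: "j \<noteq> i"
    and sign: "s = 1 \<or> s = - 1"
    and A_eq: "\<And>p. A p = s * (p $ i - p $ j)"
    and B_upd: "\<And>p t. B (upd p i t) = B p" and C_upd: "\<And>p t. C (upd p i t) = C p"
    and B_qpoly: "B \<in> qpoly" and C_qpoly: "C \<in> qpoly"
    and nonzero: "\<And>p. p \<in> U6 \<Longrightarrow> A p \<noteq> 0 \<and> B p \<noteq> 0 \<and> C p \<noteq> 0"
    and involution: "index_involution \<sigma>"
    and frame: "\<And>p k. k < 8 \<Longrightarrow> basis k (A p) (B p) (C p) = basis (\<sigma> k) (Xc p) (Yc p) (Zc p)"
begin

lemma sign_squared: "s * s = 1"
  using sign by auto

lemma sign_Rats: "s \<in> \<rat>"
  using sign by auto

lemma A_qpoly: "A \<in> qpoly"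
  unfolding A_eq[abs_def] by (intro qpoly_mult qpoly_diff qpoly_var qpoly_Rats sign_Rats)

lemma A_upd: "A (upd p i t) = A p + s * (t - p $ i)"
  using j_neq_i by (simp add: A_eq upd_nth algebra_simps)

lemma coordinate_eq: "p $ i = s * A p + p $ j"
proof -
  have "s * A p = p $ i - p $ j" unfolding A_eq mult.assoc[symmetric] sign_squared by simp
  then show ?thesis by simp
qed

lemma antiderivable_lift:
  assumes "g \<in> x_antiderivable" shows "(\<lambda>p. g (A p) (B p) (C p)) \<in> antiderivable i"
proof -
  obtain q where q: "\<And>k. q k \<in> qpoly3"
    "\<And>x y z. x \<noteq> 0 \<Longrightarrow> y \<noteq> 0 \<Longrightarrow> z \<noteq> 0 \<Longrightarrow> ((\<lambda>t. comb3 q t y z) has_real_derivative g x y z) (at x)"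
    using assms by (rule x_antiderivableE) blast
  let ?Q = "\<lambda>k p. s * q (\<sigma> k) (A p) (B p) (C p)"
  have comb: "comb6 ?Q p = s * comb3 q (A p) (B p) (C p)" for p
  proof -
    have "comb3 q (A p) (B p) (C p) = (\<Sum>k\<in>{1..<8}. q (\<sigma> k) (A p) (B p) (C p) * basis k (Xc p) (Yc p) (Zc p))"
      unfolding comb3_def by (rule sum_basis_change[OF involution frame])
    then show ?thesis by (simp only: comb6_def sum_distrib_left mult.assoc)
  qed
  have "has_partial (comb6 ?Q) i (\<lambda>p. g (A p) (B p) (C p)) U6"
    unfolding has_partial_def
  proof
    fix p assume "p \<in> U6"
    have "((\<lambda>t. A p + s * (t - p $ i)) has_real_derivative s) (at (p $ i))"
      by (auto intro!: derivative_eq_intros)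
    from DERIV_chain2[OF q(2) this] nonzero[OF \<open>p \<in> U6\<close>]
    have "((\<lambda>t. comb3 q (A p + s * (t - p $ i)) (B p) (C p)) has_real_derivative g (A p) (B p) (C p) * s)
        (at (p $ i))" by simp
    then have "((\<lambda>t. s * comb3 q (A p + s * (t - p $ i)) (B p) (C p)) has_real_derivative
        s * (g (A p) (B p) (C p) * s)) (at (p $ i))" by (rule DERIV_cmult)
    moreover have "s * (g (A p) (B p) (C p) * s) = (s * s) * g (A p) (B p) (C p)"
      by (simp only: mult_ac)
    moreover have "comb6 ?Q (upd p i t) = s * comb3 q (A p + s * (t - p $ i)) (B p) (C p)" for t
      unfolding comb A_upd B_upd C_upd ..
    ultimately show "((\<lambda>t. comb6 ?Q (upd p i t)) has_real_derivative g (A p) (B p) (C p)) (at (p $ i))"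
      by (simp add: sign_squared)
  qed
  then show ?thesis
    by (rule antiderivableI[rotated])
       (rule qpoly_mult[OF qpoly_Rats[OF sign_Rats] qpoly3_compose[OF q(1) A_qpoly B_qpoly C_qpoly]])
qed

lemma antiderivable_pow_mul_basis:
  assumes "k < 8" shows "(\<lambda>p. A p ^ n * basis k (Xc p) (Yc p) (Zc p)) \<in> antiderivable i"
proof -
  have "\<sigma> k < 8" "\<sigma> (\<sigma> k) = k" using involution assms unfolding index_involution_def by auto
  with antiderivable_lift[OF x_antiderivable_pow_mul_basis[of "\<sigma> k" n]] show ?thesis
    by (simp add: frame)
qed

text \<open>By induction on \<open>P\<close>; the coordinate \<open>p\<^sub>i\<close> itself is rewritten as \<open>s A + p\<^sub>j\<close>, whose
  first summand is absorbed by the power of \<open>A\<close>.\<close>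
lemma antiderivable_poly_mul:
  assumes "P \<in> qpoly" and G: "\<And>n. (\<lambda>p. A p ^ n * G p) \<in> antiderivable i"
  shows "(\<lambda>p. A p ^ n * (P p * G p)) \<in> antiderivable i"
  using assms(1) G
proof (induction P arbitrary: n G rule: qpoly.induct)
  case (qpoly_const c)
  have "(\<lambda>p. of_rat c * (A p ^ n * G p)) \<in> antiderivable i"
    by (intro antiderivable_mult qpoly.qpoly_const qpoly_const.prems) simp
  then show ?case by (simp add: mult_ac)
next
  case (qpoly_var l)
  show ?case
  proof (cases "l = i")
    case True
    have "(\<lambda>p. s * (A p ^ Suc n * G p) + p $ j * (A p ^ n * G p)) \<in> antiderivable i"
      using j_neq_i
      by (intro antiderivable_add antiderivable_mult qpoly_var.prems qpoly_Rats sign_Rats qpoly.qpoly_var)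
         (simp_all add: upd_nth)
    then show ?thesis using True by (simp add: coordinate_eq algebra_simps)
  next
    case False
    have "(\<lambda>p. p $ l * (A p ^ n * G p)) \<in> antiderivable i"
      using False by (intro antiderivable_mult qpoly_var.prems qpoly.qpoly_var) (simp add: upd_nth)
    then show ?thesis by (simp add: mult_ac)
  qed
next
  case (qpoly_add f g)
  have "(\<lambda>p. A p ^ n * (f p * G p) + A p ^ n * (g p * G p)) \<in> antiderivable i"
    by (intro antiderivable_add qpoly_add.IH qpoly_add.prems)
  then show ?case by (simp add: algebra_simps)
next
  case (qpoly_mult f g)
  have "(\<lambda>p. A p ^ n * (f p * (g p * G p))) \<in> antiderivable i"
    by (intro qpoly_mult.IH qpoly_mult.prems)
  then show ?case by (simp add: mult.assoc)
qed

lemma antiderivable_poly_mul_basis: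
  "P \<in> qpoly \<Longrightarrow> k < 8 \<Longrightarrow> (\<lambda>p. P p * basis k (Xc p) (Yc p) (Zc p)) \<in> antiderivable i"
  using antiderivable_poly_mul[OF _ antiderivable_pow_mul_basis, of P k 0] by simp

end

lemma coordinate_frame_exists: "\<exists>j s A B C \<sigma>. coordinate_frame i j s A B C \<sigma>"
proof -
  have X: "coordinate_frame i j s Xc Yc Zc id"
    if "Xc = (\<lambda>p. s * (p $ i - p $ j))" "j \<noteq> i" "s = 1 \<or> s = - 1" "i \<in> {1, 4}" "j \<in> {1, 4}" for j s
    using that index_involutions(1) qpoly_coordinate_differences
    by unfold_locales (auto simp: U6_def Yc_def Zc_def upd_nth fun_eq_iff)
  have Y: "coordinate_frame i j s Yc Xc Zc swap_xy_index"
    if "Yc = (\<lambda>p. s * (p $ i - p $ j))" "j \<noteq> i" "s = 1 \<or> s = - 1" "i \<in> {2, 5}" "j \<in> {2, 5}" for j s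
    using that index_involutions(3) qpoly_coordinate_differences basis_swaps(2)
    by unfold_locales (auto simp: U6_def Xc_def Zc_def upd_nth fun_eq_iff)
  have Z: "coordinate_frame i j s Zc Yc Xc swap_xz_index"
    if "Zc = (\<lambda>p. s * (p $ i - p $ j))" "j \<noteq> i" "s = 1 \<or> s = - 1" "i \<in> {3, 6}" "j \<in> {3, 6}" for j s
    using that index_involutions(4) qpoly_coordinate_differences basis_swaps(3)
    by unfold_locales (auto simp: U6_def Xc_def Yc_def upd_nth fun_eq_iff)
  show ?thesis
    using exhaust_6[of i]
  proof (elim disjE)
    assume "i = 1"
    then have "coordinate_frame i 4 1 Xc Yc Zc id" by (intro X) (auto simp: Xc_def fun_eq_iff)
    then show ?thesis by (intro exI)
  next
    assume "i = 2"
    then have "coordinate_frame i 5 1 Yc Xc Zc swap_xy_index" by (intro Y) (auto simp: Yc_def fun_eq_iff)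
    then show ?thesis by (intro exI)
  next
    assume "i = 3"
    then have "coordinate_frame i 6 1 Zc Yc Xc swap_xz_index" by (intro Z) (auto simp: Zc_def fun_eq_iff)
    then show ?thesis by (intro exI)
  next
    assume "i = 4"
    then have "coordinate_frame i 1 (- 1) Xc Yc Zc id" by (intro X) (auto simp: Xc_def fun_eq_iff)
    then show ?thesis by (intro exI)
  next
    assume "i = 5"
    then have "coordinate_frame i 2 (- 1) Yc Xc Zc swap_xy_index" by (intro Y) (auto simp: Yc_def fun_eq_iff)
    then show ?thesis by (intro exI)
  next
    assume "i = 6"
    then have "coordinate_frame i 3 (- 1) Zc Yc Xc swap_xz_index" by (intro Z) (auto simp: Zc_def fun_eq_iff)
    then show ?thesis by (intro exI)
  qed
qed

lemma FF_antiderivable: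
  assumes "P1 \<in> qpoly" "P2 \<in> qpoly" "P3 \<in> qpoly" "P4 \<in> qpoly"
    "P5 \<in> qpoly" "P6 \<in> qpoly" "P7 \<in> qpoly" "P8 \<in> qpoly"
  shows "FF P1 P2 P3 P4 P5 P6 P7 P8 \<in> antiderivable i"
proof -
  obtain j s A B C \<sigma> where "coordinate_frame i j s A B C \<sigma>"
    using coordinate_frame_exists by blast
  then interpret coordinate_frame i j s A B C \<sigma> .
  let ?b = "\<lambda>k p. basis k (Xc p) (Yc p) (Zc p)"
  have "FF P1 P2 P3 P4 P5 P6 P7 P8 = (\<lambda>p. P1 p * ?b 0 p + P2 p * ?b 1 p + P3 p * ?b 2 p + P4 p * ?b 3 p
      + P5 p * ?b 4 p + P6 p * ?b 5 p + P7 p * ?b 6 p + P8 p * ?b 7 p)"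
    by (simp add: fun_eq_iff FF_def basis_def Rc_eq_rad)
  then show ?thesis
    by (simp only:) (intro antiderivable_add antiderivable_poly_mul_basis assms; simp)
qed

lemma qpoly_zero: "(\<lambda>_. 0) \<in> qpoly"
  using qpoly_const[of 0] by simp

definition FF_qpoly :: "(real^6 \<Rightarrow> real) set" where
  "FF_qpoly = {FF P1 P2 P3 P4 P5 P6 P7 P8 | P1 P2 P3 P4 P5 P6 P7 P8.
     P1 \<in> qpoly \<and> P2 \<in> qpoly \<and> P3 \<in> qpoly \<and> P4 \<in> qpoly \<and>
     P5 \<in> qpoly \<and> P6 \<in> qpoly \<and> P7 \<in> qpoly \<and> P8 \<in> qpoly}"

lemma FF_qpolyI:
  "P1 \<in> qpoly \<Longrightarrow> P2 \<in> qpoly \<Longrightarrow> P3 \<in> qpoly \<Longrightarrow> P4 \<in> qpoly \<Longrightarrow>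
    P5 \<in> qpoly \<Longrightarrow> P6 \<in> qpoly \<Longrightarrow> P7 \<in> qpoly \<Longrightarrow> P8 \<in> qpoly \<Longrightarrow>
    FF P1 P2 P3 P4 P5 P6 P7 P8 \<in> FF_qpoly"
  unfolding FF_qpoly_def by blast

lemma FF_qpolyE:
  assumes "F \<in> FF_qpoly"
  obtains P1 P2 P3 P4 P5 P6 P7 P8 where "F = FF P1 P2 P3 P4 P5 P6 P7 P8"
    "P1 \<in> qpoly" "P2 \<in> qpoly" "P3 \<in> qpoly" "P4 \<in> qpoly"
    "P5 \<in> qpoly" "P6 \<in> qpoly" "P7 \<in> qpoly" "P8 \<in> qpoly"
  using assms unfolding FF_qpoly_def by blast

lemma FF_qpoly_has_antiderivative:
  assumes "F \<in> FF_qpoly" shows "\<exists>H \<in> FF_qpoly. has_partial H i F U6"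
proof -
  have "F \<in> antiderivable i"
    using assms by (rule FF_qpolyE) (simp add: FF_antiderivable)
  then obtain Q where Q: "\<And>k. Q k \<in> qpoly" "has_partial (comb6 Q) i F U6"
    by (rule antiderivableE) blast
  have "comb6 Q \<in> FF_qpoly"
    unfolding FF_zero_eq_comb6[symmetric] by (intro FF_qpolyI qpoly_zero Q(1))
  with Q(2) show ?thesis by blast
qed

lemma FF_qpoly_iterated_antiderivative:
  assumes "F \<in> FF_qpoly"
  shows "\<exists>G. G 0 \<in> FF_qpoly \<and> G (length ds) = F \<and>
    (\<forall>k < length ds. has_partial (G k) (ds ! k) (G (Suc k)) U6)"
proof (induction ds)
  case Nil
  show ?case using assms by auto
next
  case (Cons d ds)
  then obtain G where G: "G 0 \<in> FF_qpoly" "G (length ds) = F"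
    "\<forall>k < length ds. has_partial (G k) (ds ! k) (G (Suc k)) U6" by blast
  obtain H where "H \<in> FF_qpoly" "has_partial H d (G 0) U6"
    using FF_qpoly_has_antiderivative[OF G(1)] by blast
  with G have "case_nat H G 0 \<in> FF_qpoly \<and> case_nat H G (length (d # ds)) = F \<and>
      (\<forall>k < length (d # ds). has_partial (case_nat H G k) ((d # ds) ! k) (case_nat H G (Suc k)) U6)"
    by (auto simp: less_Suc_eq_0_disj)
  then show ?case by blast
qed

lemma FF_partial_antiderivative:
  assumes "P1 \<in> qpoly" "P2 \<in> qpoly" "P3 \<in> qpoly" "P4 \<in> qpoly"
    "P5 \<in> qpoly" "P6 \<in> qpoly" "P7 \<in> qpoly" "P8 \<in> qpoly"
  shows "\<exists>Q1 Q2 Q3 Q4 Q5 Q6 Q7 Q8. Q1 = (\<lambda>_. 0) \<and> Q2 \<in> qpoly \<and> Q3 \<in> qpoly \<and> Q4 \<in> qpoly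
      \<and> Q5 \<in> qpoly \<and> Q6 \<in> qpoly \<and> Q7 \<in> qpoly \<and> Q8 \<in> qpoly
      \<and> has_partial (FF Q1 Q2 Q3 Q4 Q5 Q6 Q7 Q8) i (FF P1 P2 P3 P4 P5 P6 P7 P8) U6"
proof -
  obtain Q where Q: "\<And>k. Q k \<in> qpoly" "has_partial (comb6 Q) i (FF P1 P2 P3 P4 P5 P6 P7 P8) U6"
    using FF_antiderivable[OF assms] by (rule antiderivableE) blast
  then have "(\<lambda>_. 0) = (\<lambda>_. 0) \<and> Q 1 \<in> qpoly \<and> Q 2 \<in> qpoly \<and> Q 3 \<in> qpoly \<and> Q 4 \<in> qpoly
      \<and> Q 5 \<in> qpoly \<and> Q 6 \<in> qpoly \<and> Q 7 \<in> qpoly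
      \<and> has_partial (FF (\<lambda>_. 0) (Q 1) (Q 2) (Q 3) (Q 4) (Q 5) (Q 6) (Q 7)) i (FF P1 P2 P3 P4 P5 P6 P7 P8) U6"
    unfolding FF_zero_eq_comb6 by simp
  then show ?thesis by blast
qed

lemma monomial_div_R_sixfold_antiderivative:
  fixes l1 l2 l3 m1 m2 m3 :: nat
  shows "\<exists>Q1 Q2 Q3 Q4 Q5 Q6 Q7 Q8. \<exists>G :: nat \<Rightarrow> real^6 \<Rightarrow> real.
      Q1 \<in> qpoly \<and> Q2 \<in> qpoly \<and> Q3 \<in> qpoly \<and> Q4 \<in> qpoly \<and> Q5 \<in> qpoly
      \<and> Q6 \<in> qpoly \<and> Q7 \<in> qpoly \<and> Q8 \<in> qpoly
      \<and> G 0 = FF Q1 Q2 Q3 Q4 Q5 Q6 Q7 Q8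
      \<and> G 6 = (\<lambda>p. p$1 ^ l1 * p$2 ^ l2 * p$3 ^ l3 * p$4 ^ m1 * p$5 ^ m2 * p$6 ^ m3 / Rc p)
      \<and> (\<forall>k<6. has_partial (G k) ([3, 2, 1, 6, 5, 4] ! k) (G (Suc k)) U6)"
proof -
  let ?M = "\<lambda>p::real^6. p$1 ^ l1 * p$2 ^ l2 * p$3 ^ l3 * p$4 ^ m1 * p$5 ^ m2 * p$6 ^ m3"
  let ?O = "\<lambda>_::real^6. 0::real"
  have "?M \<in> qpoly" by (intro qpoly_mult qpoly_power qpoly_var)
  then have "FF ?M ?O ?O ?O ?O ?O ?O ?O \<in> FF_qpoly" by (intro FF_qpolyI qpoly_zero)
  note iterated = FF_qpoly_iterated_antiderivative[OF this, of "[3, 2, 1, 6, 5, 4]"]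
  have "FF ?M ?O ?O ?O ?O ?O ?O ?O = (\<lambda>p. ?M p / Rc p)" by (simp add: fun_eq_iff FF_def)
  moreover have "length [3, 2, 1, 6, 5, 4 :: 6] = 6" by simp
  ultimately have "\<exists>G. G 0 \<in> FF_qpoly \<and> G 6 = (\<lambda>p. ?M p / Rc p)
      \<and> (\<forall>k<6. has_partial (G k) ([3, 2, 1, 6, 5, 4] ! k) (G (Suc k)) U6)"
    using iterated by (simp only:)
  then obtain G where G: "G 0 \<in> FF_qpoly \<and> G 6 = (\<lambda>p. ?M p / Rc p)
      \<and> (\<forall>k<6. has_partial (G k) ([3, 2, 1, 6, 5, 4] ! k) (G (Suc k)) U6)" ..
  from G[THEN conjunct1] obtain Q1 Q2 Q3 Q4 Q5 Q6 Q7 Q8 where Q: "G 0 = FF Q1 Q2 Q3 Q4 Q5 Q6 Q7 Q8"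
    "Q1 \<in> qpoly" "Q2 \<in> qpoly" "Q3 \<in> qpoly" "Q4 \<in> qpoly"
    "Q5 \<in> qpoly" "Q6 \<in> qpoly" "Q7 \<in> qpoly" "Q8 \<in> qpoly"
    by (rule FF_qpolyE) blast
  show ?thesis
    by (rule exI[of _ Q1], rule exI[of _ Q2], rule exI[of _ Q3], rule exI[of _ Q4], rule exI[of _ Q5],
        rule exI[of _ Q6], rule exI[of _ Q7], rule exI[of _ Q8], rule exI[of _ G]) (use G Q in simp)
qed

theorem mainTheorem5:
  fixes P1 P2 P3 P4 P5 P6 P7 P8 :: "real^6 \<Rightarrow> real" and i :: 6
  assumes "P1 \<in> qpoly" "P2 \<in> qpoly" "P3 \<in> qpoly" "P4 \<in> qpoly"
    "P5 \<in> qpoly" "P6 \<in> qpoly" "P7 \<in> qpoly" "P8 \<in> qpoly"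
  shows "(\<exists>Q1 Q2 Q3 Q4 Q5 Q6 Q7 Q8.
            Q1 = (\<lambda>_. 0) \<and> Q2 \<in> qpoly \<and> Q3 \<in> qpoly \<and> Q4 \<in> qpoly \<and> Q5 \<in> qpoly
            \<and> Q6 \<in> qpoly \<and> Q7 \<in> qpoly \<and> Q8 \<in> qpoly
            \<and> has_partial (FF Q1 Q2 Q3 Q4 Q5 Q6 Q7 Q8) i (FF P1 P2 P3 P4 P5 P6 P7 P8) U6)
       \<and> (\<forall>l1 l2 l3 m1 m2 m3 :: nat.
            \<exists>Q1 Q2 Q3 Q4 Q5 Q6 Q7 Q8. \<exists>G :: nat \<Rightarrow> real^6 \<Rightarrow> real.
              Q1 \<in> qpoly \<and> Q2 \<in> qpoly \<and> Q3 \<in> qpoly \<and> Q4 \<in> qpoly \<and> Q5 \<in> qpoly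
              \<and> Q6 \<in> qpoly \<and> Q7 \<in> qpoly \<and> Q8 \<in> qpoly
              \<and> G 0 = FF Q1 Q2 Q3 Q4 Q5 Q6 Q7 Q8
              \<and> G 6 = (\<lambda>p. p$1 ^ l1 * p$2 ^ l2 * p$3 ^ l3 * p$4 ^ m1 * p$5 ^ m2 * p$6 ^ m3 / Rc p)
              \<and> (\<forall>k<6. has_partial (G k) ([3, 2, 1, 6, 5, 4] ! k) (G (Suc k)) U6))"
  by (intro conjI allI FF_partial_antiderivative[OF assms] monomial_div_R_sixfold_antiderivative)

end
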